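(* Let $u$ and $v$ be vertices of $T$ such that $u$ is a descendant of $v$ and $T^v$ is contained in $T^u$. Let $T'$ be the canonical subtree among the connected components of the forest obtained from $T^u$ by deleting $C_{T^u}$ which contains $v$, and let $X$ be the set of vertices in $C_{T^u}$ that are descendants of $v$ and ancestors of $u$. Let $x$ be the element of $X$ that is highest in $T$. Then either $rt(T')$ or $l(T')$ is the parent of $x$.
   Context: Let $T$ be a rooted tree on $n$ vertices with positive edge weights. Ancestor/descendant refer to $T$, and a vertex counts as its own ancestor and descendant. $T_v$ denotes the subtree of $T$ rooted at $v$. For every non-leaf vertex $v$ of $T$ fix a child $c_1(v)$ with $|T_{c_1(v)}|$ maximal among the children of $v$; the edges $(v,c_1(v))$ are called leftmost. A subtree $R$ of $T$ (connected subgraph) is rooted at its vertex closest to the root of $T$, denoted $rt(R)$, and inherits the leftmost labelling; $R_v$ is the subtree of $R$ rooted at $v$. For $v\in V(R)$, $P_R(v)$ is the longest downward path from $v$ in $R$ using only leftmost edges; its last vertex is $l(v)$, and $l(R):=l(rt(R))$. For an integer $d$, a vertex $v$ of $R$ is $d$-balanced (in $R$) if $|R_{c_1(v)}|\le |R|-d$ (where $|R_{c_1(v)}|=0$ if $c_1(v)$ is undefined or not in $R$). $b_d(v)$ is the first $d$-balanced vertex on $P_R(v)$, or NULL if none. Define $CV(R,d)=\emptyset$ if $b_d(rt(R))$ is NULL, and otherwise, with $b=b_d(rt(R))$, $CV(R,d)=\{b\}\cup\bigcup_{w}CV(R_w,d)$, the union over the children $w$ of $b$ in $R$. Fix an integer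 $k\ge 4$. For a subtree $R$ with $m$ vertices, $C_R:=V(R)$ if $k\ge m/2-1$, and otherwise $C_R:=CV(R,m/k)\cup\{l(R),rt(R)\}$. Canonical subtrees: $T$ is canonical; if $R$ is canonical, every connected component of the forest obtained from $R$ by deleting the vertices of $C_R$ (and incident edges) is canonical. Every vertex $v$ of $T$ belongs to $C_R$ for exactly one canonical subtree $R$, denoted $T^v$. *)

theory Defs
  imports Complex_Main
begin

text \<open>A rooted tree is given by a finite vertex set V, a root r and a parent
  function par (with the convention par r = r).  Edge weights play no role in
  the statement and are omitted.  Subtrees of T are represented by their vertex sets.\<close>

definition anc :: "('a \<Rightarrow> 'a) \<Rightarrow> 'a \<Rightarrow> 'a \<Rightarrow> bool" where
  "anc par a w \<longleftrightarrow> (\<exists>n. (par ^^ n) w = a)"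

definition is_rooted_tree :: "'a set \<Rightarrow> 'a \<Rightarrow> ('a \<Rightarrow> 'a) \<Rightarrow> bool" where
  "is_rooted_tree V r par \<longleftrightarrow> finite V \<and> r \<in> V \<and> par r = r \<and>
     (\<forall>v\<in>V. v \<noteq> r \<longrightarrow> par v \<in> V) \<and> (\<forall>v\<in>V. anc par r v)"

definition children :: "'a set \<Rightarrow> 'a \<Rightarrow> ('a \<Rightarrow> 'a) \<Rightarrow> 'a \<Rightarrow> 'a set" where
  "children V r par v = {w \<in> V. w \<noteq> r \<and> par w = v}"

definition sub :: "('a \<Rightarrow> 'a) \<Rightarrow> 'a set \<Rightarrow> 'a \<Rightarrow> 'a set" where
  "sub par R v = {w \<in> R. anc par v w}"

definition leftmost_choice :: "'a set \<Rightarrow> 'a \<Rightarrow> ('a \<Rightarrow> 'a) \<Rightarrow> ('a \<Rightarrow> 'a) \<Rightarrow> bool" where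
  "leftmost_choice V r par c1 \<longleftrightarrow> (\<forall>v\<in>V. children V r par v \<noteq> {} \<longrightarrow>
      c1 v \<in> children V r par v \<and>
      (\<forall>w\<in>children V r par v. card (sub par V w) \<le> card (sub par V (c1 v))))"

definition has_lm :: "'a set \<Rightarrow> 'a \<Rightarrow> ('a \<Rightarrow> 'a) \<Rightarrow> ('a \<Rightarrow> 'a) \<Rightarrow> 'a set \<Rightarrow> 'a \<Rightarrow> bool" where
  "has_lm V r par c1 R v \<longleftrightarrow> children V r par v \<noteq> {} \<and> c1 v \<in> R"

inductive onP :: "'a set \<Rightarrow> 'a \<Rightarrow> ('a \<Rightarrow> 'a) \<Rightarrow> ('a \<Rightarrow> 'a) \<Rightarrow> 'a set \<Rightarrow> 'a \<Rightarrow> 'a \<Rightarrow> bool"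
  for V r par c1 R where
  onP_start: "v \<in> R \<Longrightarrow> onP V r par c1 R v v"
| onP_step: "onP V r par c1 R v w \<Longrightarrow> has_lm V r par c1 R w \<Longrightarrow> onP V r par c1 R v (c1 w)"

definition lend :: "'a set \<Rightarrow> 'a \<Rightarrow> ('a \<Rightarrow> 'a) \<Rightarrow> ('a \<Rightarrow> 'a) \<Rightarrow> 'a set \<Rightarrow> 'a \<Rightarrow> 'a" where
  "lend V r par c1 R v = (THE w. onP V r par c1 R v w \<and> \<not> has_lm V r par c1 R w)"

definition rt :: "('a \<Rightarrow> 'a) \<Rightarrow> 'a set \<Rightarrow> 'a" where
  "rt par R = (THE t. t \<in> R \<and> (\<forall>w\<in>R. anc par t w))"

definition lR :: "'a set \<Rightarrow> 'a \<Rightarrow> ('a \<Rightarrow> 'a) \<Rightarrow> ('a \<Rightarrow> 'a) \<Rightarrow> 'a set \<Rightarrow> 'a" where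
  "lR V r par c1 R = lend V r par c1 R (rt par R)"

text \<open>d-balanced in R (d real, since it is instantiated with m/k).\<close>
definition balanced :: "'a set \<Rightarrow> 'a \<Rightarrow> ('a \<Rightarrow> 'a) \<Rightarrow> ('a \<Rightarrow> 'a) \<Rightarrow> 'a set \<Rightarrow> real \<Rightarrow> 'a \<Rightarrow> bool" where
  "balanced V r par c1 R d v \<longleftrightarrow>
     real (if has_lm V r par c1 R v then card (sub par R (c1 v)) else 0) \<le> real (card R) - d"

definition bfirst :: "'a set \<Rightarrow> 'a \<Rightarrow> ('a \<Rightarrow> 'a) \<Rightarrow> ('a \<Rightarrow> 'a) \<Rightarrow> 'a set \<Rightarrow> real \<Rightarrow> 'a \<Rightarrow> 'a option" where
  "bfirst V r par c1 R d v =
     (if \<exists>w. onP V r par c1 R v w \<and> balanced V r par c1 R d w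
      then Some (THE w. onP V r par c1 R v w \<and> balanced V r par c1 R d w \<and>
                   (\<forall>y. onP V r par c1 R v y \<and> balanced V r par c1 R d y \<longrightarrow> anc par w y))
      else None)"

text \<open>CV(R,d), as the least set closed under the recursive definition.\<close>
inductive inCV :: "'a set \<Rightarrow> 'a \<Rightarrow> ('a \<Rightarrow> 'a) \<Rightarrow> ('a \<Rightarrow> 'a) \<Rightarrow> 'a set \<Rightarrow> real \<Rightarrow> 'a \<Rightarrow> bool"
  for V r par c1 where
  inCV_b: "bfirst V r par c1 R d (rt par R) = Some b \<Longrightarrow> inCV V r par c1 R d b"
| inCV_rec: "bfirst V r par c1 R d (rt par R) = Some b \<Longrightarrow> w \<in> children V r par b \<Longrightarrow> w \<in> R \<Longrightarrow>
     inCV V r par c1 (sub par R w) d x \<Longrightarrow> inCV V r par c1 R d x"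

definition CV :: "'a set \<Rightarrow> 'a \<Rightarrow> ('a \<Rightarrow> 'a) \<Rightarrow> ('a \<Rightarrow> 'a) \<Rightarrow> 'a set \<Rightarrow> real \<Rightarrow> 'a set" where
  "CV V r par c1 R d = {x. inCV V r par c1 R d x}"

definition CR :: "'a set \<Rightarrow> 'a \<Rightarrow> ('a \<Rightarrow> 'a) \<Rightarrow> ('a \<Rightarrow> 'a) \<Rightarrow> nat \<Rightarrow> 'a set \<Rightarrow> 'a set" where
  "CR V r par c1 k R =
     (let m = card R in
      if real k \<ge> real m / 2 - 1 then R
      else CV V r par c1 R (real m / real k) \<union> {lR V r par c1 R, rt par R})"

definition adj_in :: "'a \<Rightarrow> ('a \<Rightarrow> 'a) \<Rightarrow> 'a set \<Rightarrow> 'a \<Rightarrow> 'a \<Rightarrow> bool" where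
  "adj_in r par A x y \<longleftrightarrow> x \<in> A \<and> y \<in> A \<and> ((x \<noteq> r \<and> par x = y) \<or> (y \<noteq> r \<and> par y = x))"

definition comps :: "'a \<Rightarrow> ('a \<Rightarrow> 'a) \<Rightarrow> 'a set \<Rightarrow> 'a set set" where
  "comps r par A = {K. \<exists>x\<in>A. K = {y. (adj_in r par A)\<^sup>*\<^sup>* x y}}"

inductive canonical :: "'a set \<Rightarrow> 'a \<Rightarrow> ('a \<Rightarrow> 'a) \<Rightarrow> ('a \<Rightarrow> 'a) \<Rightarrow> nat \<Rightarrow> 'a set \<Rightarrow> bool"
  for V r par c1 k where
  canon_T: "canonical V r par c1 k V"
| canon_comp: "canonical V r par c1 k R \<Longrightarrow> K \<in> comps r par (R - CR V r par c1 k R) \<Longrightarrow>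
     canonical V r par c1 k K"

end

theory Submission
  imports Defs
begin

text \<open>
  By the choice of x, the vertices between v and par x avoid C = C_{T^u}, so par x lies in the
  component T' of v.  Every vertex x \<noteq> rt(T^u) of C lies strictly inside a leftmost path of T^u
  that starts at rt(T^u) or just below a vertex of C: for l(T^u) this is clear, for CV(T^u, d)
  it follows along the recursive definition.  Hence x is the leftmost child of par x, and
  climbing that path from par x inside T^u - C reaches rt(T'), because the path cannot enter T'
  from above.  So the leftmost path of T' from its root runs down to par x and stops there, as
  its next vertex x is in C: par x = l(T').
\<close>

lemma anc_refl [simp]: "anc par a a"
  unfolding anc_def by (metis funpow_0)

lemma anc_trans: "anc par a b \<Longrightarrow> anc par b c \<Longrightarrow> anc par a c"
  unfolding anc_def by (metis funpow_add o_apply)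

lemma anc_parent: "anc par (par b) b"
  unfolding anc_def by (rule exI[of _ 1]) simp

lemma anc_parent_right:
  assumes "anc par a b" "a \<noteq> b"
  shows "anc par a (par b)"
proof -
  obtain n where "(par ^^ n) b = a"
    using assms(1) unfolding anc_def by blast
  with assms(2) obtain m where "(par ^^ m) (par b) = a"
    by (cases n) (auto simp: funpow_swap1)
  then show ?thesis
    unfolding anc_def by blast
qed

lemma anc_linear:
  assumes "anc par a y" "anc par b y"
  shows "anc par a b \<or> anc par b a"
proof -
  obtain n m where n: "(par ^^ n) y = a" and m: "(par ^^ m) y = b"
    using assms unfolding anc_def by blast
  show ?thesis
  proof (cases "n \<le> m")
    case True
    then have "(par ^^ (m - n)) a = b"
      using n m by (metis funpow_add le_add_diff_inverse2 o_apply)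
    then show ?thesis unfolding anc_def by blast
  next
    case False
    then have "(par ^^ (n - m)) b = a"
      using n m by (metis funpow_add le_add_diff_inverse2 nat_le_linear o_apply)
    then show ?thesis unfolding anc_def by blast
  qed
qed

locale rooted_tree =
  fixes V :: "'a set" and r :: 'a and par :: "'a \<Rightarrow> 'a"
  assumes is_tree: "is_rooted_tree V r par"
begin

lemma finite_V: "finite V"
  and root_in_V: "r \<in> V"
  and par_root: "par r = r"
  and anc_root: "v \<in> V \<Longrightarrow> anc par r v"
  using is_tree unfolding is_rooted_tree_def by blast+

lemma par_in_V: "v \<in> V \<Longrightarrow> par v \<in> V"
  using is_tree root_in_V par_root unfolding is_rooted_tree_def by metis

lemma anc_in_V:
  assumes "anc par a b" "b \<in> V"
  shows "a \<in> V"
proof -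
  obtain n where "(par ^^ n) b = a"
    using assms(1) unfolding anc_def by blast
  moreover have "(par ^^ n) b \<in> V"
    using assms(2) by (induction n) (auto simp: par_in_V)
  ultimately show ?thesis by simp
qed

definition depth :: "'a \<Rightarrow> nat" where
  "depth v = (LEAST n. (par ^^ n) v = r)"

lemma depth_par_less:
  assumes "v \<in> V" "v \<noteq> r"
  shows "depth (par v) < depth v"
proof -
  have "\<exists>n. (par ^^ n) v = r"
    using anc_root[OF assms(1)] unfolding anc_def .
  then have reach: "(par ^^ depth v) v = r"
    unfolding depth_def by (rule LeastI_ex)
  with assms(2) obtain m where m: "depth v = Suc m"
    by (cases "depth v") auto
  then have "(par ^^ m) (par v) = r"
    using reach by (simp add: funpow_swap1)
  then have "depth (par v) \<le> m"
    unfolding depth_def by (rule Least_le)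
  then show ?thesis
    using m by simp
qed

lemma anc_depth_less:
  assumes "anc par a b" "a \<noteq> b" "b \<in> V"
  shows "depth a < depth b"
proof -
  obtain n where "(par ^^ n) b = a"
    using assms(1) unfolding anc_def by blast
  then show ?thesis
    using assms(2,3)
  proof (induction n arbitrary: b)
    case 0
    then show ?case by simp
  next
    case (Suc n)
    have "b \<noteq> r"
    proof
      assume "b = r"
      then have "(par ^^ Suc n) b = b"
        by (induction n) (simp_all add: par_root)
      then show False
        using Suc.prems(1,2) by simp
    qed
    then have less: "depth (par b) < depth b"
      using depth_par_less Suc.prems(3) by blast
    have "(par ^^ n) (par b) = a"
      using Suc.prems(1) by (simp add: funpow_swap1)
    then show ?case
      using Suc.IH[of "par b"] less par_in_V Suc.prems(3)
      by (cases "par b = a") fastforce+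
  qed
qed

lemma anc_antisym:
  assumes "anc par a b" "anc par b a" "b \<in> V"
  shows "a = b"
  using anc_depth_less[OF assms(1) _ assms(3)] anc_depth_less[OF assms(2) _ anc_in_V[OF assms(1,3)]]
  by fastforce

lemma par_neq: "v \<in> V \<Longrightarrow> v \<noteq> r \<Longrightarrow> par v \<noteq> v"
  using depth_par_less by fastforce

lemma rt_eqI:
  assumes "R \<subseteq> V" "t \<in> R" "\<forall>q\<in>R. anc par t q"
  shows "rt par R = t"
  unfolding rt_def
proof (rule the_equality)
  show "t \<in> R \<and> (\<forall>w\<in>R. anc par t w)"
    using assms(2,3) by blast
next
  fix t' assume "t' \<in> R \<and> (\<forall>w\<in>R. anc par t' w)"
  then show "t' = t"
    using assms anc_antisym by blast
qed

definition rooted_subtree :: "'a set \<Rightarrow> bool" where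
  "rooted_subtree R \<longleftrightarrow> R \<subseteq> V \<and>
     (\<exists>t\<in>R. \<forall>q\<in>R. anc par t q \<and> (\<forall>q'. anc par t q' \<and> anc par q' q \<longrightarrow> q' \<in> R))"

lemma rooted_subtree_subset: "rooted_subtree R \<Longrightarrow> R \<subseteq> V"
  unfolding rooted_subtree_def by blast

lemma
  assumes "rooted_subtree R"
  shows rt_in: "rt par R \<in> R"
    and rt_anc: "q \<in> R \<Longrightarrow> anc par (rt par R) q"
    and rt_between: "q \<in> R \<Longrightarrow> anc par (rt par R) q' \<Longrightarrow> anc par q' q \<Longrightarrow> q' \<in> R"
proof -
  obtain t where t: "t \<in> R" "\<forall>q\<in>R. anc par t q \<and> (\<forall>q'. anc par t q' \<and> anc par q' q \<longrightarrow> q' \<in> R)"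
    using assms unfolding rooted_subtree_def by blast
  moreover have "rt par R = t"
    using rt_eqI t rooted_subtree_subset[OF assms] by blast
  ultimately show "rt par R \<in> R" "q \<in> R \<Longrightarrow> anc par (rt par R) q"
    "q \<in> R \<Longrightarrow> anc par (rt par R) q' \<Longrightarrow> anc par q' q \<Longrightarrow> q' \<in> R"
    by blast+
qed

lemma rooted_subtree_V: "rooted_subtree V"
  unfolding rooted_subtree_def using root_in_V anc_root anc_in_V by blast

abbreviation adj :: "'a set \<Rightarrow> 'a \<Rightarrow> 'a \<Rightarrow> bool" where
  "adj A \<equiv> adj_in r par A"

lemma adj_sym: "(adj A)\<^sup>*\<^sup>* a b \<Longrightarrow> (adj A)\<^sup>*\<^sup>* b a"
  by (rule sympD[OF symp_rtranclp]) (auto simp: adj_in_def intro: sympI)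

lemma adj_in_set: "(adj A)\<^sup>*\<^sup>* a q \<Longrightarrow> a \<in> A \<Longrightarrow> q \<in> A"
  by (induction rule: rtranclp_induct) (auto simp: adj_in_def)

lemma comps_eq:
  assumes "K \<in> comps r par A" "a \<in> K"
  shows "K = {q. (adj A)\<^sup>*\<^sup>* a q}"
proof -
  obtain x where "K = {y. (adj A)\<^sup>*\<^sup>* x y}"
    using assms(1) unfolding comps_def by blast
  then show ?thesis
    using assms(2) adj_sym by (auto intro: rtranclp_trans)
qed

lemma comps_subset: "K \<in> comps r par A \<Longrightarrow> K \<subseteq> A"
  unfolding comps_def using adj_in_set by blast

lemma comps_nonempty: "K \<in> comps r par A \<Longrightarrow> K \<noteq> {}"
  unfolding comps_def by blast

lemma rtranclp_adj_from_top:
  assumes "z \<in> V" "z \<noteq> r \<Longrightarrow> par z \<notin> A" "(adj A)\<^sup>*\<^sup>* z q"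
  shows "anc par z q \<and> (\<forall>q'. anc par z q' \<and> anc par q' q \<longrightarrow> (adj A)\<^sup>*\<^sup>* z q')"
  using assms(3)
proof (induction rule: rtranclp_induct)
  case base
  then show ?case
    using anc_antisym[OF _ _ assms(1)] by auto
next
  case (step q q2)
  from step.hyps(2) consider (up) "q \<noteq> r" "par q = q2" | (down) "q2 \<noteq> r" "par q2 = q"
    unfolding adj_in_def by blast
  then show ?case
  proof cases
    case up
    have "q \<noteq> z"
      using up assms(2) step.hyps(2) unfolding adj_in_def by blast
    then have "anc par z q2"
      using anc_parent_right[of par z q] step.IH up by simp
    moreover have "anc par q' q" if "anc par q' q2" for q'
      using that up anc_parent[of par q] anc_trans by metis
    ultimately show ?thesis
      using step.IH by blast
  next
    case down
    have "anc par z q2"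
      using down step.IH anc_parent[of par q2] anc_trans by metis
    moreover have "(adj A)\<^sup>*\<^sup>* z q'" if "anc par z q'" "anc par q' q2" for q'
    proof (cases "q' = q2")
      case True
      then show ?thesis
        using step.hyps by simp
    next
      case False
      then have "anc par q' q"
        using anc_parent_right[OF that(2)] down by simp
      then show ?thesis
        using step.IH that(1) by blast
    qed
    ultimately show ?thesis
      by blast
  qed
qed

lemma comps_rooted_subtree:
  assumes "A \<subseteq> V" "K \<in> comps r par A"
  shows "rooted_subtree K"
proof -
  obtain a where "a \<in> K"
    using comps_nonempty[OF assms(2)] by blast
  then obtain z where z: "z \<in> K" and z_min: "\<And>y. y \<in> K \<Longrightarrow> depth z \<le> depth y"
    using ex_has_least_nat[of "\<lambda>y. y \<in> K" a depth] by blast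
  have K_z: "K = {q. (adj A)\<^sup>*\<^sup>* z q}"
    using comps_eq[OF assms(2) z] .
  have zA: "z \<in> A" and zV: "z \<in> V"
    using z comps_subset[OF assms(2)] assms(1) by blast+
  have top: "par z \<notin> A" if "z \<noteq> r"
  proof
    assume "par z \<in> A"
    then have "par z \<in> K"
      using K_z zA that unfolding adj_in_def by blast
    then show False
      using z_min depth_par_less[OF zV that] by fastforce
  qed
  have "anc par z q \<and> (\<forall>q'. anc par z q' \<and> anc par q' q \<longrightarrow> q' \<in> K)" if "q \<in> K" for q
    using rtranclp_adj_from_top[OF zV top, of q] that K_z by simp
  then show ?thesis
    unfolding rooted_subtree_def using z comps_subset[OF assms(2)] assms(1) by blast
qed

lemma comps_contains_ancestor_path:
  assumes "K \<in> comps r par A" "v \<in> K" "anc par v y"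
    and between: "\<forall>q. anc par v q \<and> anc par q y \<longrightarrow> q \<in> A"
  shows "y \<in> K"
proof -
  obtain n where "(par ^^ n) y = v"
    using assms(3) unfolding anc_def by blast
  then have "(adj A)\<^sup>*\<^sup>* v y"
    using between
  proof (induction n arbitrary: y)
    case 0
    then show ?case by simp
  next
    case (Suc n)
    have reach: "(par ^^ n) (par y) = v"
      using Suc.prems(1) by (simp add: funpow_swap1)
    have "anc par q y" if "anc par q (par y)" for q
      using that anc_parent[of par y] anc_trans by metis
    then have path: "(adj A)\<^sup>*\<^sup>* v (par y)"
      using Suc.IH[OF reach] Suc.prems(2) by blast
    show ?case
    proof (cases "y = r")
      case True
      then show ?thesis
        using path par_root by simp
    next
      case False
      have "anc par v y" "anc par v (par y)"
        using Suc.prems(1) reach unfolding anc_def by blast+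
      then have "par y \<in> A" "y \<in> A"
        using Suc.prems(2) anc_parent[of par y] by auto
      then have "adj A (par y) y"
        using False unfolding adj_in_def by blast
      then show ?thesis
        using path by simp
    qed
  qed
  then show ?thesis
    using comps_eq[OF assms(1,2)] by blast
qed

lemma parent_of_highest_in_component:
  assumes R: "rooted_subtree R" and C: "C \<subseteq> R"
    and K: "K \<in> comps r par (R - C)" "v \<in> K"
    and x: "x \<in> C" "anc par v x"
    and highest: "\<forall>y\<in>C. anc par v y \<and> anc par y x \<longrightarrow> anc par x y"
  shows "x \<noteq> r \<and> par x \<in> K"
proof -
  have vA: "v \<in> R - C"
    using comps_subset[OF K(1)] K(2) by blast
  have xV: "x \<in> V" and vV: "v \<in> V"
    using x(1) C vA rooted_subtree_subset[OF R] by auto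
  have "v \<noteq> x"
    using vA x(1) by blast
  have "x \<noteq> r"
  proof
    assume "x = r"
    then show False
      using anc_antisym[OF _ anc_root[OF vV] root_in_V] x(2) \<open>v \<noteq> x\<close> by simp
  qed
  have "q \<in> R - C" if q: "anc par v q" "anc par q (par x)" for q
  proof
    have qx: "anc par q x"
      using anc_trans[OF q(2) anc_parent] .
    have "anc par (rt par R) q"
      using anc_trans[OF rt_anc[OF R] q(1)] vA by blast
    then show "q \<in> R"
      using rt_between[OF R _ _ qx] x(1) C by blast
    show "q \<notin> C"
    proof
      assume "q \<in> C"
      then have "anc par x q"
        using highest q(1) qx by blast
      then have "par x = x"
        using anc_antisym[OF anc_parent anc_trans[OF _ q(2)] xV] by blast
      then show False
        using par_neq[OF xV \<open>x \<noteq> r\<close>] by blast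
    qed
  qed
  then have "par x \<in> K"
    using comps_contains_ancestor_path[OF K anc_parent_right[OF x(2) \<open>v \<noteq> x\<close>]] by blast
  with \<open>x \<noteq> r\<close> show ?thesis
    by blast
qed

end

locale leftmost_tree = rooted_tree +
  fixes c1 :: "'a \<Rightarrow> 'a"
  assumes c1_child: "v \<in> V \<Longrightarrow> children V r par v \<noteq> {} \<Longrightarrow> c1 v \<in> children V r par v"
begin

abbreviation onp :: "'a set \<Rightarrow> 'a \<Rightarrow> 'a \<Rightarrow> bool" where
  "onp \<equiv> onP V r par c1"

abbreviation hlm :: "'a set \<Rightarrow> 'a \<Rightarrow> bool" where
  "hlm \<equiv> has_lm V r par c1"

lemmas onp_start = onP.onP_start[of _ _ V r par c1]
  and onp_step = onP.onP_step[of V r par c1]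

lemma has_lm_c1:
  assumes "hlm R w" "w \<in> V"
  shows "c1 w \<in> R" "par (c1 w) = w" "c1 w \<noteq> r"
  using assms c1_child unfolding has_lm_def children_def by blast+

lemma onP_mem: "onp R v w \<Longrightarrow> v \<in> R \<and> w \<in> R"
  by (induction rule: onP.induct) (auto simp: has_lm_def)

lemma onP_anc: "onp R v w \<Longrightarrow> R \<subseteq> V \<Longrightarrow> anc par v w"
proof (induction rule: onP.induct)
  case (onP_start v)
  then show ?case by simp
next
  case (onP_step v w)
  then have "par (c1 w) = w"
    using has_lm_c1 onP_mem by blast
  then show ?case
    using onP_step anc_parent[of par "c1 w"] anc_trans by metis
qed

lemma onP_from_cases: "onp R v w \<Longrightarrow> w = v \<or> (hlm R v \<and> onp R (c1 v) w)"
proof (induction rule: onP.induct)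
  case (onP_start v)
  then show ?case by simp
next
  case (onP_step v w)
  then show ?case
    using onP_mem has_lm_c1 onp_start onp_step by (metis has_lm_def)
qed

lemma onP_linear: "onp R v b \<Longrightarrow> onp R v a \<Longrightarrow> onp R a b \<or> onp R b a"
proof (induction rule: onP.induct)
  case (onP_start v)
  then show ?case by simp
next
  case (onP_step v w)
  from onP_step.IH[OF onP_step.prems] show ?case
  proof
    assume "onp R a w"
    then show ?thesis
      using onP_step.hyps(2) onp_step by blast
  next
    assume "onp R w a"
    moreover have "onp R w (c1 w)"
      using onP_mem[OF onP_step.hyps(1)] onP_step.hyps(2) onp_start onp_step by metis
    ultimately show ?thesis
      using onP_from_cases by blast
  qed
qed

lemma onP_mono: "onp R v w \<Longrightarrow> R \<subseteq> R' \<Longrightarrow> onp R' v w"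
proof (induction rule: onP.induct)
  case (onP_start v)
  then show ?case
    by (simp add: onp_start subsetD)
next
  case (onP_step v w)
  then show ?case
    using onp_step unfolding has_lm_def by blast
qed

lemma onP_between:
  assumes "R \<subseteq> V" "onp R w y" "anc par w q" "anc par q y"
  shows "onp R w q \<and> onp R q y"
  using assms(2-4)
proof (induction arbitrary: q rule: onP.induct)
  case (onP_start v)
  have "v \<in> V"
    using onP_start.hyps assms(1) by blast
  then have "q = v"
    using anc_antisym onP_start.prems by blast
  then show ?case
    using onP_start.hyps onp_start by simp
next
  case (onP_step v w)
  have wV: "w \<in> V"
    using onP_mem[OF onP_step.hyps(1)] assms(1) by blast
  note c1w = has_lm_c1[OF onP_step.hyps(2) wV]
  show ?case
  proof (cases "q = c1 w")
    case True
    then show ?thesis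
      using onp_step[OF onP_step.hyps] onp_start[OF c1w(1)] by simp
  next
    case False
    then have "anc par q w"
      using anc_parent_right[OF onP_step.prems(2)] c1w(2) by simp
    then have "onp R v q" "onp R q w"
      using onP_step.IH onP_step.prems(1) by blast+
    then show ?thesis
      using onp_step onP_step.hyps(2) by blast
  qed
qed

lemma onP_restrict:
  assumes "R \<subseteq> V" "onp R a b" "\<forall>q. anc par a q \<and> anc par q b \<longrightarrow> q \<in> K"
  shows "onp K a b"
  using assms(2,3)
proof (induction rule: onP.induct)
  case (onP_start v)
  then show ?case
    using onp_start by simp
next
  case (onP_step v w)
  have wV: "w \<in> V"
    using onP_mem[OF onP_step.hyps(1)] assms(1) by blast
  have "anc par w (c1 w)"
    using has_lm_c1(2)[OF onP_step.hyps(2) wV] anc_parent[of par "c1 w"] by simp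
  then have "\<forall>q. anc par v q \<and> anc par q w \<longrightarrow> q \<in> K"
    using onP_step.prems anc_trans[of par _ w "c1 w"] by blast
  then have "onp K v w"
    by (rule onP_step.IH)
  have "anc par v (c1 w)"
    using onP_anc[OF onp_step[OF onP_step.hyps] assms(1)] .
  then have "hlm K w"
    using onP_step.hyps(2) onP_step.prems unfolding has_lm_def by simp
  with \<open>onp K v w\<close> show ?case
    by (rule onp_step)
qed

lemma lend_eqI:
  assumes "onp R v e" "\<not> hlm R e"
  shows "lend V r par c1 R v = e"
  unfolding lend_def
proof (rule the_equality)
  show "onp R v e \<and> \<not> hlm R e"
    using assms by simp
next
  fix e' assume e': "onp R v e' \<and> \<not> hlm R e'"
  then have "onp R e e' \<or> onp R e' e"
    using onP_linear[OF _ assms(1)] by blast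
  then show "e' = e"
  proof
    assume "onp R e e'"
    from onP_from_cases[OF this] show ?thesis
      using assms(2) by blast
  next
    assume "onp R e' e"
    from onP_from_cases[OF this] show ?thesis
      using e' by blast
  qed
qed

lemma lend_onP:
  assumes "R \<subseteq> V" "v \<in> R"
  shows "onp R v (lend V r par c1 R v)"
proof -
  define S where "S = {w. onp R v w}"
  have "S \<subseteq> V"
    using onP_mem assms(1) unfolding S_def by blast
  then have "finite S"
    using finite_V finite_subset by blast
  moreover have "v \<in> S"
    using onp_start[OF assms(2)] unfolding S_def by simp
  ultimately have "Max (depth ` S) \<in> depth ` S"
    by (intro Max_in) auto
  then obtain e where e: "e \<in> S" "depth e = Max (depth ` S)"
    by auto
  have e_max: "depth y \<le> depth e" if "y \<in> S" for y
    using \<open>finite S\<close> that e(2) by simp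
  have "\<not> hlm R e"
  proof
    assume lm: "hlm R e"
    have eV: "e \<in> V"
      using e(1) \<open>S \<subseteq> V\<close> by blast
    note c1e = has_lm_c1[OF lm eV]
    have "c1 e \<in> S"
      using onp_step[OF _ lm] e(1) unfolding S_def by simp
    then have "depth (c1 e) \<le> depth e"
      by (rule e_max)
    moreover have "depth e < depth (c1 e)"
      using depth_par_less[of "c1 e"] c1e assms(1) by auto
    ultimately show False
      by simp
  qed
  then show ?thesis
    using lend_eqI e(1) unfolding S_def by simp
qed

lemma lR_onP: "rooted_subtree R \<Longrightarrow> onp R (rt par R) (lR V r par c1 R)"
  unfolding lR_def by (rule lend_onP[OF rooted_subtree_subset rt_in])

lemma onP_first:
  assumes "R \<subseteq> V" "onp R v q" "P q"
  shows "\<exists>f. onp R v f \<and> P f \<and> (\<forall>y. onp R v y \<and> P y \<longrightarrow> anc par f y)"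
proof -
  obtain f where f: "onp R v f" "P f" and f_min: "\<And>y. onp R v y \<and> P y \<Longrightarrow> depth f \<le> depth y"
    using ex_has_least_nat[of "\<lambda>y. onp R v y \<and> P y" q depth] assms(2,3) by blast
  have "anc par f y" if y: "onp R v y" "P y" for y
  proof -
    from onP_linear[OF y(1) f(1)] consider "onp R f y" | "onp R y f"
      by blast
    then show ?thesis
    proof cases
      case 1
      then show ?thesis
        using onP_anc assms(1) by blast
    next
      case 2
      have "f \<in> V"
        using onP_mem[OF f(1)] assms(1) by blast
      then have "y = f"
        using anc_depth_less[OF onP_anc[OF 2 assms(1)]] f_min y by fastforce
      then show ?thesis
        by simp
    qed
  qed
  then show ?thesis
    using f by blast
qed

lemma bfirst_onP:
  assumes "R \<subseteq> V" "bfirst V r par c1 R d v = Some b"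
  shows "onp R v b"
proof -
  let ?B = "balanced V r par c1 R d"
  let ?first = "\<lambda>w. onp R v w \<and> ?B w \<and> (\<forall>y. onp R v y \<and> ?B y \<longrightarrow> anc par w y)"
  have "\<exists>w. onp R v w \<and> ?B w" and b: "b = (THE w. ?first w)"
    using assms(2) unfolding bfirst_def by (auto split: if_splits)
  then obtain f where f: "?first f"
    using onP_first[OF assms(1)] by blast
  have "(THE w. ?first w) = f"
  proof (rule the_equality)
    fix w assume "?first w"
    then show "w = f"
      using f anc_antisym onP_mem assms(1) by blast
  qed (rule f)
  then show ?thesis
    using b f by simp
qed

lemma inCV_on_leftmost_path:
  "inCV V r par c1 R d x \<Longrightarrow> R \<subseteq> V \<Longrightarrow>
     \<exists>w. onp R w x \<and> (w = rt par R \<or> (w \<noteq> r \<and> par w \<in> CV V r par c1 R d))"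
proof (induction rule: inCV.induct)
  case (inCV_b R d b)
  then show ?case
    using bfirst_onP[OF inCV_b.prems inCV_b.hyps] by blast
next
  case (inCV_rec R d b w' x)
  have sub_R: "sub par R w' \<subseteq> R"
    unfolding sub_def by blast
  then obtain w where w: "onp (sub par R w') w x"
    "w = rt par (sub par R w') \<or> (w \<noteq> r \<and> par w \<in> CV V r par c1 (sub par R w') d)"
    using inCV_rec.IH[OF subset_trans[OF sub_R inCV_rec.prems]] by blast
  have on_R: "onp R w x"
    using onP_mono[OF w(1) sub_R] .
  have "w' \<in> sub par R w'" "\<forall>q\<in>sub par R w'. anc par w' q"
    using inCV_rec.hyps(3) unfolding sub_def by simp_all
  then have rt_sub: "rt par (sub par R w') = w'"
    using rt_eqI subset_trans[OF sub_R inCV_rec.prems] by blast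
  from w(2) show ?case
  proof
    assume "w = rt par (sub par R w')"
    then have "w \<noteq> r" "par w = b"
      using rt_sub inCV_rec.hyps(2) unfolding children_def by auto
    moreover have "b \<in> CV V r par c1 R d"
      unfolding CV_def using inCV.inCV_b[OF inCV_rec.hyps(1)] by simp
    ultimately show ?thesis
      using on_R by auto
  next
    assume "w \<noteq> r \<and> par w \<in> CV V r par c1 (sub par R w') d"
    then have "w \<noteq> r" "par w \<in> CV V r par c1 R d"
      using inCV.inCV_rec[OF inCV_rec.hyps(1-3)] unfolding CV_def by auto
    then show ?thesis
      using on_R by auto
  qed
qed

lemma CR_subset:
  assumes "rooted_subtree R"
  shows "CR V r par c1 k R \<subseteq> R"
proof -
  have "x \<in> R" if x_CV: "x \<in> CV V r par c1 R d" for x d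
  proof -
    obtain w where "onp R w x"
      using inCV_on_leftmost_path[OF _ rooted_subtree_subset[OF assms]] x_CV unfolding CV_def by blast
    then show ?thesis
      using onP_mem by blast
  qed
  moreover have "lR V r par c1 R \<in> R"
    using lR_onP[OF assms] onP_mem by blast
  ultimately show ?thesis
    using rt_in[OF assms] unfolding CR_def Let_def by auto
qed

lemma canonical_rooted_subtree: "canonical V r par c1 k R \<Longrightarrow> rooted_subtree R"
proof (induction rule: canonical.induct)
  case canon_T
  then show ?case
    by (rule rooted_subtree_V)
next
  case (canon_comp R K)
  have "R - CR V r par c1 k R \<subseteq> V"
    using rooted_subtree_subset[OF canon_comp.IH] by blast
  then show ?case
    using comps_rooted_subtree canon_comp.hyps(2) by blast
qed

lemma CR_vertex_on_leftmost_path: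
  assumes R: "rooted_subtree R" and x: "x \<in> CR V r par c1 k R" "x \<noteq> r"
    and par_x: "par x \<in> R - CR V r par c1 k R"
  shows "\<exists>w. onp R w x \<and> x \<noteq> w \<and>
    (w \<in> CR V r par c1 k R \<or> (w \<noteq> r \<and> par w \<in> CR V r par c1 k R))"
proof -
  define d where "d = real (card R) / real k"
  have "\<not> real k \<ge> real (card R) / 2 - 1"
    using par_x unfolding CR_def Let_def by auto
  then have C_eq: "CR V r par c1 k R = CV V r par c1 R d \<union> {lR V r par c1 R, rt par R}"
    unfolding CR_def Let_def d_def by simp
  have xV: "x \<in> V"
    using x(1) CR_subset[OF R] rooted_subtree_subset[OF R] by blast
  have "x \<noteq> rt par R"
  proof
    assume "x = rt par R"
    then have "anc par x (par x)"
      using rt_anc[OF R] par_x by blast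
    then have "par x = x"
      using anc_antisym anc_parent xV by metis
    then show False
      using par_neq xV x(2) by blast
  qed
  then consider "x = lR V r par c1 R" | "x \<in> CV V r par c1 R d"
    using x(1) C_eq by blast
  then show ?thesis
  proof cases
    case 1
    then show ?thesis
      using lR_onP[OF R] \<open>x \<noteq> rt par R\<close> C_eq by auto
  next
    case 2
    then obtain w where w: "onp R w x" "w = rt par R \<or> (w \<noteq> r \<and> par w \<in> CV V r par c1 R d)"
      using inCV_on_leftmost_path rooted_subtree_subset[OF R] unfolding CV_def by blast
    moreover have "x \<noteq> w"
      using w(2) \<open>x \<noteq> rt par R\<close> par_x C_eq by auto
    ultimately show ?thesis
      using C_eq by auto
  qed
qed

lemma parent_of_CR_vertex_is_lR:
  assumes R: "rooted_subtree R" and x: "x \<in> CR V r par c1 k R" "x \<noteq> r"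
    and K: "K \<in> comps r par (R - CR V r par c1 k R)" "par x \<in> K"
  shows "par x = lR V r par c1 K"
proof -
  define C where "C = CR V r par c1 k R"
  define y where "y = par x"
  have KA: "K \<subseteq> R - C"
    using comps_subset[OF K(1)] unfolding C_def .
  have RV: "R \<subseteq> V"
    using rooted_subtree_subset[OF R] .
  obtain w where w: "onp R w x" "x \<noteq> w" "w \<in> C \<or> (w \<noteq> r \<and> par w \<in> C)"
    using CR_vertex_on_leftmost_path[OF R x] K KA unfolding C_def y_def by blast
  from w(1,2) obtain y' where y': "onp R w y'" "hlm R y'" "x = c1 y'"
    by (cases rule: onP.cases) auto
  have "par x = y'"
    using has_lm_c1(2)[OF y'(2)] y'(1,3) onP_mem RV by blast
  then have wy: "onp R w y" and c1_y: "c1 y = x"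
    using y' unfolding y_def by auto
  have K_tree: "rooted_subtree K"
    using comps_rooted_subtree[OF _ K(1)] RV by blast
  define z where "z = rt par K"
  have yK: "y \<in> K"
    using K(2) unfolding y_def .
  have zy: "anc par z y"
    using rt_anc[OF K_tree yK] unfolding z_def .
  txt \<open>The path cannot enter K from above: w or its parent lies in C.\<close>
  have "anc par w z"
  proof (rule ccontr)
    assume "\<not> anc par w z"
    then have zw: "anc par z w" "z \<noteq> w"
      using anc_linear[OF onP_anc[OF wy RV] zy] by auto
    then have "w \<in> K"
      using rt_between[OF K_tree yK] onP_anc[OF wy RV] unfolding z_def by blast
    moreover have "par w \<in> K"
      using rt_between[OF K_tree yK] anc_parent_right[OF zw] anc_trans[OF anc_parent onP_anc[OF wy RV]]
      unfolding z_def by blast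
    ultimately show False
      using w(3) KA by blast
  qed
  then have "onp R z y"
    using onP_between[OF RV wy _ zy] by blast
  then have "onp K z y"
    using onP_restrict[OF RV] rt_between[OF K_tree yK] unfolding z_def by blast
  moreover have "\<not> hlm K y"
    using c1_y x(1) KA unfolding has_lm_def C_def by blast
  ultimately have "lend V r par c1 K z = y"
    by (rule lend_eqI)
  then show ?thesis
    unfolding lR_def z_def y_def by simp
qed

end

lemma leftmost_tree_of_leftmost_choice:
  assumes "is_rooted_tree V r par" "leftmost_choice V r par c1"
  shows "leftmost_tree V r par c1"
  using assms unfolding leftmost_tree_def leftmost_tree_axioms_def rooted_tree_def leftmost_choice_def
  by blast

theorem lemma6:
  fixes V :: "'a set" and r :: 'a and par c1 :: "'a \<Rightarrow> 'a" and k :: nat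
    and u v x :: 'a and Tu Tv T' :: "'a set"
  assumes tree: "is_rooted_tree V r par"
    and lm: "leftmost_choice V r par c1"
    and k4: "k \<ge> 4"
    and uV: "u \<in> V" and vV: "v \<in> V"
    and desc: "anc par v u"
    and Tu: "canonical V r par c1 k Tu" "u \<in> CR V r par c1 k Tu"
    and Tv: "canonical V r par c1 k Tv" "v \<in> CR V r par c1 k Tv"
    and sub: "Tv \<subseteq> Tu"
    and T': "T' \<in> comps r par (Tu - CR V r par c1 k Tu)" "v \<in> T'"
    and xX: "x \<in> CR V r par c1 k Tu" "anc par v x" "anc par x u"
    and xhigh: "\<forall>y. y \<in> CR V r par c1 k Tu \<and> anc par v y \<and> anc par y u \<longrightarrow> anc par x y"
  shows "x \<noteq> r \<and> (par x = rt par T' \<or> par x = lR V r par c1 T')"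
proof -
  interpret leftmost_tree V r par c1
    using tree lm by (rule leftmost_tree_of_leftmost_choice)
  have Tu_tree: "rooted_subtree Tu"
    using canonical_rooted_subtree[OF Tu(1)] .
  have "\<forall>y\<in>CR V r par c1 k Tu. anc par v y \<and> anc par y x \<longrightarrow> anc par x y"
    using xhigh anc_trans[OF _ xX(3)] by simp
  then have "x \<noteq> r" "par x \<in> T'"
    using parent_of_highest_in_component[OF Tu_tree CR_subset[OF Tu_tree] T' xX(1,2)] by blast+
  then show ?thesis
    using parent_of_CR_vertex_is_lR[OF Tu_tree xX(1) _ T'(1)] by simp
qed

end
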